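(* There exist absolute constants $C_1,C_2>0$ and $C_3>1$ with the following property. Let $(V_o,w_o,\mu_o)$ be any simple weighted graph with adapted weight $\sigma_o$, and let $(V,w,\mu)$ be its modified graph with any weight $\mathfrak n$. Define the bounded function $\mathcal U$ on $V$ by $\mathcal U(x)=-C_1$ for $x\in V\setminus V_o$ and $\mathcal U(x)=C_2$ for $x\in V_o$. Then there exists a function $\varphi$ on $V$ with $1\le\varphi\le C_3$ and \[(\Delta+\mathcal U)\varphi\ge0\quad\text{on }V,\] where $\Delta$ is the formal Laplacian of $(V,w,\mu)$.
   Context: **Weighted graphs.** A simple weighted graph $(V,w,\mu)$ consists of a countably infinite set $V$, a symmetric function $w:V\times V\to[0,\infty)$ and a function $\mu:V\to(0,\infty)$. The graph with edges $\{x\sim y:w(x,y)>0\}$ is assumed to be locally finite, connected, and without loops or multiple edges. **Adapted weights.** An adapted weight is a symmetric $\sigma:E\to(0,1]$ with $\frac1{\mu(x)}\sum_y w(x,y)\sigma(x,y)^2\le1$ for all $x$. **Formal Laplacian.** $\Delta u(x)=\frac1{\mu(x)}\sum_y w(x,y)(u(x)-u(y))$. **Modified graph.** Fix an orientation $E_o^+$ of $E_o$, and let $\mathfrak n:E_o\to\mathbb N_+$ be symmetric with $\mathfrak n\ge2$. For $e=(x,y)\in E_o^+$, add distinct new vertices $x^e_1,\dots,x^e_{\mathfrak n(e)-1}$, set $x_0^e=x$, $x^e_{\mathfrak n(e)}=y$, and replace the edge $x\sim y$ by the path $x^e_0\sim\cdots\sim x^e_{\mathfrak n(e)}$. Weights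 and measure: - $w(x^e_i,x^e_{i+1})=\mathfrak n(e)w_o(e)$, symmetric, and $w=0$ otherwise; - $\mu=\mu_o$ on $V_o$, and $\mu(x^e_i)=2w_o(e)\sigma_o(e)^2/\mathfrak n(e)$ for $1\le i\le\mathfrak n(e)-1$. *)

theory Defs
  imports "HOL-Analysis.Analysis"
begin

text \<open>Simple weighted graphs. The countably infinite vertex set is taken, without loss of
generality, to be an infinite subset of nat (so that constants can be absolute).\<close>

definition simple_weighted_graph :: "nat set \<Rightarrow> (nat \<Rightarrow> nat \<Rightarrow> real) \<Rightarrow> (nat \<Rightarrow> real) \<Rightarrow> bool" where
  "simple_weighted_graph V w \<mu> \<longleftrightarrow>
     infinite V \<and>
     (\<forall>x y. w x y = w y x) \<and> (\<forall>x y. w x y \<ge> 0) \<and>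
     (\<forall>x y. w x y > 0 \<longrightarrow> x \<in> V \<and> y \<in> V) \<and>
     (\<forall>x\<in>V. \<mu> x > 0) \<and>
     (\<forall>x. w x x = 0) \<and>
     (\<forall>x\<in>V. finite {y. w x y > 0}) \<and>
     (\<forall>x\<in>V. \<forall>y\<in>V. (x, y) \<in> {(a, b). w a b > 0}\<^sup>*)"

definition edges :: "(nat \<Rightarrow> nat \<Rightarrow> real) \<Rightarrow> (nat \<times> nat) set" where
  "edges w = {(x, y). w x y > 0}"

definition adapted_weight ::
  "(nat \<Rightarrow> nat \<Rightarrow> real) \<Rightarrow> (nat \<Rightarrow> real) \<Rightarrow> (nat \<Rightarrow> nat \<Rightarrow> real) \<Rightarrow> bool" where
  "adapted_weight w \<mu> \<sigma> \<longleftrightarrow>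
     (\<forall>(x, y) \<in> edges w. \<sigma> x y = \<sigma> y x \<and> 0 < \<sigma> x y \<and> \<sigma> x y \<le> 1) \<and>
     (\<forall>x. (\<exists>y. w x y > 0) \<longrightarrow>
        (1 / \<mu> x) * (\<Sum>y\<in>{y. w x y > 0}. w x y * (\<sigma> x y)\<^sup>2) \<le> 1)"

definition orientation :: "(nat \<Rightarrow> nat \<Rightarrow> real) \<Rightarrow> (nat \<times> nat) set \<Rightarrow> bool" where
  "orientation w Ep \<longleftrightarrow> Ep \<subseteq> edges w \<and>
     (\<forall>(x, y) \<in> edges w. ((x, y) \<in> Ep) \<noteq> ((y, x) \<in> Ep))"

definition admissible_n :: "(nat \<Rightarrow> nat \<Rightarrow> real) \<Rightarrow> (nat \<Rightarrow> nat \<Rightarrow> nat) \<Rightarrow> bool" where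
  "admissible_n w nn \<longleftrightarrow> (\<forall>(x, y) \<in> edges w. nn x y = nn y x \<and> nn x y \<ge> 2)"

text \<open>Vertices of the modified graph: original vertices, and new vertices x^e_i
  for e = (x,y) in the orientation, 1 \<le> i \<le> n(e)-1.\<close>
datatype mvert = Orig nat | New nat nat nat

definition pv :: "nat \<Rightarrow> nat \<Rightarrow> nat \<Rightarrow> nat \<Rightarrow> mvert" where
  "pv x y n i = (if i = 0 then Orig x else if i = n then Orig y else New x y i)"

definition mod_V :: "nat set \<Rightarrow> (nat \<times> nat) set \<Rightarrow> (nat \<Rightarrow> nat \<Rightarrow> nat) \<Rightarrow> mvert set" where
  "mod_V V Ep nn = Orig ` V \<union> {New x y i | x y i. (x, y) \<in> Ep \<and> 1 \<le> i \<and> i \<le> nn x y - 1}"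

definition mod_edge :: "(nat \<times> nat) set \<Rightarrow> (nat \<Rightarrow> nat \<Rightarrow> nat) \<Rightarrow> mvert \<Rightarrow> mvert \<Rightarrow> nat \<Rightarrow> nat \<Rightarrow> nat \<Rightarrow> bool" where
  "mod_edge Ep nn u v x y i \<longleftrightarrow> (x, y) \<in> Ep \<and> i < nn x y \<and>
     ((u = pv x y (nn x y) i \<and> v = pv x y (nn x y) (Suc i)) \<or>
      (v = pv x y (nn x y) i \<and> u = pv x y (nn x y) (Suc i)))"

definition mod_w :: "(nat \<Rightarrow> nat \<Rightarrow> real) \<Rightarrow> (nat \<times> nat) set \<Rightarrow> (nat \<Rightarrow> nat \<Rightarrow> nat) \<Rightarrow> mvert \<Rightarrow> mvert \<Rightarrow> real" where
  "mod_w w Ep nn u v =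
     (if \<exists>x y i. mod_edge Ep nn u v x y i
      then (case SOME e. \<exists>i. mod_edge Ep nn u v (fst e) (snd e) i of
              (x, y) \<Rightarrow> real (nn x y) * w x y)
      else 0)"

definition mod_mu :: "(nat \<Rightarrow> nat \<Rightarrow> real) \<Rightarrow> (nat \<Rightarrow> real) \<Rightarrow> (nat \<Rightarrow> nat \<Rightarrow> real) \<Rightarrow> (nat \<Rightarrow> nat \<Rightarrow> nat) \<Rightarrow> mvert \<Rightarrow> real" where
  "mod_mu w \<mu> \<sigma> nn v = (case v of Orig x \<Rightarrow> \<mu> x
       | New x y i \<Rightarrow> 2 * w x y * (\<sigma> x y)\<^sup>2 / real (nn x y))"

definition laplacian :: "('v \<Rightarrow> 'v \<Rightarrow> real) \<Rightarrow> ('v \<Rightarrow> real) \<Rightarrow> ('v \<Rightarrow> real) \<Rightarrow> 'v \<Rightarrow> real" where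
  "laplacian w \<mu> u x = (1 / \<mu> x) * (\<Sum>y\<in>{y. w x y \<noteq> 0}. w x y * (u x - u y))"

end

theory Submission
  imports Defs
begin

text \<open>Take \<open>\<phi> = 1\<close> on the original vertices and, along the path of length \<open>n\<close> replacing an
edge \<open>e\<close>, the parabola \<open>\<phi>(x\<^sup>e\<^sub>i) = 1 + 2 \<sigma>(e)\<^sup>2 t (1 - t)\<close> with \<open>t = i/n\<close>; then \<open>1 \<le> \<phi> \<le> 3/2\<close>.
At an inner path vertex the Laplacian is a rescaled second difference of the parabola, which the
choice \<open>\<mu>(x\<^sup>e\<^sub>i) = 2 w(e) \<sigma>(e)\<^sup>2/n\<close> makes exactly \<open>2\<close>. At an original vertex \<open>x\<close> each incident edge
contributes at least \<open>-2 w(x,y) \<sigma>(x,y)\<^sup>2\<close>, so adaptedness of \<open>\<sigma>\<close> gives \<open>\<Delta>\<phi>(x) \<ge> -2\<close>.\<close>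

lemma pv_eq_New_iff: "pv x y n i = New a b j \<longleftrightarrow> i \<noteq> 0 \<and> i \<noteq> n \<and> a = x \<and> b = y \<and> j = i"
  by (auto simp: pv_def)

lemma pv_eq_Orig_iff: "pv x y n i = Orig z \<longleftrightarrow> i = 0 \<and> z = x \<or> i \<noteq> 0 \<and> i = n \<and> z = y"
  by (auto simp: pv_def)

lemma mod_edge_unique:
  assumes "\<forall>(a, b)\<in>Ep. 2 \<le> nn a b"
    and "mod_edge Ep nn u v x y i" and "mod_edge Ep nn u v x' y' i'"
  shows "x' = x \<and> y' = y"
proof -
  have "2 \<le> nn x y" "2 \<le> nn x' y'" using assms by (auto simp: mod_edge_def)
  then show ?thesis using assms(2,3) unfolding mod_edge_def pv_def by (auto split: if_splits)
qed

lemma mod_w_eq: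
  assumes "\<forall>(a, b)\<in>Ep. 2 \<le> nn a b" and e: "mod_edge Ep nn u v x y i"
  shows "mod_w w Ep nn u v = real (nn x y) * w x y"
proof -
  define e' where "e' = (SOME e. \<exists>i. mod_edge Ep nn u v (fst e) (snd e) i)"
  have "\<exists>i. mod_edge Ep nn u v (fst e') (snd e') i"
    unfolding e'_def by (rule someI[of _ "(x, y)"]) (use e in auto)
  with mod_edge_unique[OF assms] have "e' = (x, y)" by (cases e') auto
  then show ?thesis using e unfolding mod_w_def e'_def by auto
qed

definition hump :: "real \<Rightarrow> real \<Rightarrow> real" where
  "hump c t = 1 + 2 * c * t * (1 - t)"

lemma hump_0 [simp]: "hump c 0 = 1" and hump_1 [simp]: "hump c 1 = 1"
  by (simp_all add: hump_def)

lemma hump_one_minus: "hump c (1 - t) = hump c t"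
  by (simp add: hump_def algebra_simps)

lemma hump_bounds:
  assumes "0 \<le> c" "c \<le> 1" "0 \<le> t" "t \<le> 1"
  shows "1 \<le> hump c t \<and> hump c t \<le> 3/2"
proof -
  have "t * (1 - t) \<le> 1/4"
    using zero_le_power2[of "t - 1/2"] by (simp add: power2_eq_square algebra_simps)
  moreover have "0 \<le> t * (1 - t)" using assms by simp
  ultimately have "c * (t * (1 - t)) \<le> 1 * (1/4)" and "0 \<le> c * (t * (1 - t))"
    using assms by (metis mult_mono zero_le_one, simp)
  then show ?thesis by (simp add: hump_def algebra_simps)
qed

lemma hump_second_difference: "2 * hump c t - hump c (t - h) - hump c (t + h) = 4 * c * h\<^sup>2"
  by (simp add: hump_def power2_eq_square algebra_simps)

lemma hump_first_step:
  assumes "0 \<le> c" "1 \<le> n"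
  shows "- 2 * c \<le> n * (1 - hump c (1 / n))"
proof -
  have "n * (1 - hump c (1 / n)) = - 2 * c * (1 - 1 / n)"
    using assms by (simp add: hump_def field_simps)
  also have "\<dots> \<ge> - 2 * c" using assms by (simp add: field_simps)
  finally show ?thesis .
qed

definition hump_fun :: "(nat \<Rightarrow> nat \<Rightarrow> real) \<Rightarrow> (nat \<Rightarrow> nat \<Rightarrow> nat) \<Rightarrow> mvert \<Rightarrow> real" where
  "hump_fun \<sigma> nn v =
     (case v of Orig _ \<Rightarrow> 1 | New a b j \<Rightarrow> hump ((\<sigma> a b)\<^sup>2) (real j / real (nn a b)))"

lemma hump_fun_pv:
  "j \<le> nn a b \<Longrightarrow> 0 < nn a b \<Longrightarrow>
    hump_fun \<sigma> nn (pv a b (nn a b) j) = hump ((\<sigma> a b)\<^sup>2) (real j / real (nn a b))"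
  by (auto simp: pv_def hump_fun_def)

locale modified_graph =
  fixes V :: "nat set" and w :: "nat \<Rightarrow> nat \<Rightarrow> real" and \<mu> :: "nat \<Rightarrow> real"
    and \<sigma> :: "nat \<Rightarrow> nat \<Rightarrow> real" and Ep :: "(nat \<times> nat) set" and nn :: "nat \<Rightarrow> nat \<Rightarrow> nat"
  assumes graph: "simple_weighted_graph V w \<mu>"
    and adapted: "adapted_weight w \<mu> \<sigma>"
    and oriented: "orientation w Ep"
    and admissible: "admissible_n w nn"
begin

abbreviation \<Delta> :: "(mvert \<Rightarrow> real) \<Rightarrow> mvert \<Rightarrow> real" where
  "\<Delta> \<equiv> laplacian (mod_w w Ep nn) (mod_mu w \<mu> \<sigma> nn)"

lemma w_sym: "w x y = w y x" and w_diag: "w x x = 0"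
  using graph by (auto simp: simple_weighted_graph_def)

lemma w_Ep: "(a, b) \<in> Ep \<Longrightarrow> 0 < w a b"
  using oriented by (auto simp: orientation_def edges_def)

lemma Ep_xor: "0 < w a b \<Longrightarrow> ((a, b) \<in> Ep) \<noteq> ((b, a) \<in> Ep)"
  using oriented by (auto simp: orientation_def edges_def)

lemma nn_ge_2: "\<forall>(a, b)\<in>Ep. 2 \<le> nn a b"
  using admissible w_Ep by (auto simp: admissible_n_def edges_def)

lemma nn_sym: "0 < w a b \<Longrightarrow> nn a b = nn b a"
  using admissible by (auto simp: admissible_n_def edges_def)

lemma \<sigma>_edge: "0 < w a b \<Longrightarrow> \<sigma> a b = \<sigma> b a \<and> 0 < \<sigma> a b \<and> \<sigma> a b \<le> 1"
  using adapted by (auto simp: adapted_weight_def edges_def)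

lemma hump_fun_bounds:
  assumes "v \<in> mod_V V Ep nn"
  shows "1 \<le> hump_fun \<sigma> nn v \<and> hump_fun \<sigma> nn v \<le> 3/2"
proof (cases v)
  case (New a b i)
  with assms have ab: "(a, b) \<in> Ep" and "i \<le> nn a b" by (auto simp: mod_V_def)
  moreover have "0 < \<sigma> a b" "\<sigma> a b \<le> 1" using \<sigma>_edge[OF w_Ep[OF ab]] by auto
  moreover have "0 < nn a b" using nn_ge_2 ab by auto
  ultimately show ?thesis
    using New hump_bounds[of "(\<sigma> a b)\<^sup>2" "real i / real (nn a b)"]
    by (simp add: hump_fun_def power_le_one)
qed (simp add: hump_fun_def)

lemma laplacian_hump_fun_New:
  assumes ab: "(a, b) \<in> Ep" and i: "1 \<le> i" "i < nn a b"
  shows "\<Delta> (hump_fun \<sigma> nn) (New a b i) = 2"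
proof -
  let ?n = "nn a b" and ?c = "(\<sigma> a b)\<^sup>2" and ?p = "pv a b (nn a b)"
  have n: "2 \<le> ?n" using nn_ge_2 ab by auto
  have wab: "0 < w a b" and \<sigma>: "0 < \<sigma> a b" using w_Ep[OF ab] \<sigma>_edge[OF w_Ep[OF ab]] by auto
  have "a \<noteq> b" using w_diag wab by auto
  then have neq: "?p (i - 1) \<noteq> ?p (Suc i)" using i by (auto simp: pv_def)
  have "New a b i = ?p i" using i by (auto simp: pv_def)
  then have e_next: "mod_edge Ep nn (New a b i) (?p (Suc i)) a b i"
    and e_prev: "mod_edge Ep nn (New a b i) (?p (i - 1)) a b (i - 1)"
    using ab i by (auto simp: mod_edge_def)
  have nbrs: "{v. mod_w w Ep nn (New a b i) v \<noteq> 0} = {?p (i - 1), ?p (Suc i)}"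
  proof (intro equalityI subsetI)
    fix v assume "v \<in> {v. mod_w w Ep nn (New a b i) v \<noteq> 0}"
    then obtain x y j where "mod_edge Ep nn (New a b i) v x y j"
      unfolding mod_w_def by (auto split: if_splits)
    then show "v \<in> {?p (i - 1), ?p (Suc i)}"
      unfolding mod_edge_def by (auto simp: pv_eq_New_iff eq_commute[of "New _ _ _"])
  qed (use mod_w_eq[OF nn_ge_2 e_next] mod_w_eq[OF nn_ge_2 e_prev] wab n in auto)
  let ?t = "real i / real ?n" and ?h = "1 / real ?n"
  have "\<Delta> (hump_fun \<sigma> nn) (New a b i) = real ?n / (2 * w a b * ?c) *
      (real ?n * w a b * (2 * hump ?c ?t - hump ?c (?t - ?h) - hump ?c (?t + ?h)))"
    unfolding laplacian_def nbrs
    using neq mod_w_eq[OF nn_ge_2 e_next] mod_w_eq[OF nn_ge_2 e_prev] i n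
      hump_fun_pv[where j = "i - 1" and a = a and b = b and \<sigma> = \<sigma>]
      hump_fun_pv[where j = "Suc i" and a = a and b = b and \<sigma> = \<sigma>]
    by (simp add: mod_mu_def hump_fun_def diff_divide_distrib add_divide_distrib
        algebra_simps)
  also have "\<dots> = 2"
    unfolding hump_second_difference using wab \<sigma> n by (simp add: field_simps power2_eq_square)
  finally show ?thesis .
qed

text \<open>The path vertex adjacent to \<open>x\<close> on the path that replaces the edge \<open>x \<sim> y\<close>.\<close>
definition first_vertex :: "nat \<Rightarrow> nat \<Rightarrow> mvert" where
  "first_vertex x y = (if (x, y) \<in> Ep then New x y 1 else New y x (nn y x - 1))"

lemma first_vertex_edge:
  assumes "0 < w x y"
  shows "mod_w w Ep nn (Orig x) (first_vertex x y) = real (nn x y) * w x y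
    \<and> hump_fun \<sigma> nn (first_vertex x y) = hump ((\<sigma> x y)\<^sup>2) (1 / real (nn x y))"
proof (cases "(x, y) \<in> Ep")
  case True
  then have "mod_edge Ep nn (Orig x) (New x y 1) x y 0"
    using nn_ge_2 by (auto simp: mod_edge_def pv_def)
  then show ?thesis
    using True mod_w_eq[OF nn_ge_2] by (auto simp: first_vertex_def hump_fun_def)
next
  case False
  then have yx: "(y, x) \<in> Ep" using Ep_xor[OF assms] by simp
  then have n: "2 \<le> nn y x" using nn_ge_2 by auto
  then have "mod_edge Ep nn (Orig x) (New y x (nn y x - 1)) y x (nn y x - 1)"
    using yx by (auto simp: mod_edge_def pv_def)
  moreover have "real (nn y x - 1) / real (nn y x) = 1 - 1 / real (nn y x)"
    using n by (simp add: of_nat_diff field_simps)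
  ultimately show ?thesis
    using False mod_w_eq[OF nn_ge_2] nn_sym[OF assms] \<sigma>_edge[OF assms] w_sym[of x y]
    by (auto simp: first_vertex_def hump_fun_def hump_one_minus)
qed

lemma neighbours_Orig:
  "{v. mod_w w Ep nn (Orig x) v \<noteq> 0} \<subseteq> first_vertex x ` {y. 0 < w x y}"
proof
  fix v assume "v \<in> {v. mod_w w Ep nn (Orig x) v \<noteq> 0}"
  then obtain a b j where e: "mod_edge Ep nn (Orig x) v a b j"
    unfolding mod_w_def by (auto split: if_splits)
  then have ab: "(a, b) \<in> Ep" and j: "j < nn a b" by (auto simp: mod_edge_def)
  have n: "2 \<le> nn a b" and w: "0 < w a b" and ba: "(b, a) \<notin> Ep"
    using nn_ge_2 ab w_Ep[OF ab] Ep_xor[OF w_Ep[OF ab]] by auto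
  from e consider "Orig x = pv a b (nn a b) j" "v = pv a b (nn a b) (Suc j)"
    | "v = pv a b (nn a b) j" "Orig x = pv a b (nn a b) (Suc j)"
    by (auto simp: mod_edge_def)
  then show "v \<in> first_vertex x ` {y. 0 < w x y}"
  proof cases
    case 1
    then have "a = x" "j = 0" using j by (auto simp: eq_commute[of "Orig x"] pv_eq_Orig_iff)
    then have "v = first_vertex x b"
      using 1 ab n by (simp add: first_vertex_def pv_def)
    then show ?thesis using w \<open>a = x\<close> by blast
  next
    case 2
    then have "b = x" "j = nn a b - 1" by (auto simp: eq_commute[of "Orig x"] pv_eq_Orig_iff)
    then have "v = first_vertex x a"
      using 2 ab ba n by (simp add: first_vertex_def pv_def)
    then show ?thesis using w w_sym[of a b] \<open>b = x\<close> by simp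
  qed
qed

lemma laplacian_hump_fun_Orig:
  assumes "x \<in> V"
  shows "- 2 \<le> \<Delta> (hump_fun \<sigma> nn) (Orig x)"
proof -
  define Y where "Y = {y. 0 < w x y}"
  define f where "f v = mod_w w Ep nn (Orig x) v * (1 - hump_fun \<sigma> nn v)" for v
  have \<mu>: "0 < \<mu> x" and "finite Y"
    using graph assms by (auto simp: simple_weighted_graph_def Y_def)
  have "inj_on (first_vertex x) Y"
    using w_diag by (auto simp: inj_on_def first_vertex_def Y_def)
  have "(\<Sum>v | mod_w w Ep nn (Orig x) v \<noteq> 0. f v) = sum f (first_vertex x ` Y)"
    using \<open>finite Y\<close> neighbours_Orig unfolding Y_def f_def
    by (intro sum.mono_neutral_left) auto
  also have "\<dots> = (\<Sum>y\<in>Y. f (first_vertex x y))"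
    using \<open>inj_on (first_vertex x) Y\<close> by (rule sum.reindex_cong) simp_all
  also have "\<dots> \<ge> (\<Sum>y\<in>Y. - 2 * (w x y * (\<sigma> x y)\<^sup>2))"
  proof (rule sum_mono)
    fix y assume "y \<in> Y"
    then have w: "0 < w x y" by (simp add: Y_def)
    have "2 \<le> nn x y" using nn_ge_2 Ep_xor[OF w] nn_sym[OF w] by force
    then have "- 2 * (\<sigma> x y)\<^sup>2 \<le> real (nn x y) * (1 - hump ((\<sigma> x y)\<^sup>2) (1 / real (nn x y)))"
      by (intro hump_first_step) auto
    from mult_left_mono[OF this, of "w x y"] w
    show "- 2 * (w x y * (\<sigma> x y)\<^sup>2) \<le> f (first_vertex x y)"
      by (simp add: f_def first_vertex_edge[OF w] algebra_simps)
  qed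
  also have "(\<Sum>y\<in>Y. - 2 * (w x y * (\<sigma> x y)\<^sup>2)) \<ge> - 2 * \<mu> x"
  proof (cases "Y = {}")
    case False
    then have "(\<Sum>y\<in>Y. w x y * (\<sigma> x y)\<^sup>2) \<le> \<mu> x"
      using adapted \<mu> by (auto simp: adapted_weight_def Y_def field_simps)
    then show ?thesis by (simp add: sum_negf sum_distrib_left[symmetric])
  qed (use \<mu> in simp)
  finally have "- 2 * \<mu> x \<le> (\<Sum>v | mod_w w Ep nn (Orig x) v \<noteq> 0. f v)" .
  then show ?thesis
    using \<mu> by (simp add: laplacian_def f_def mod_mu_def hump_fun_def field_simps)
qed

lemma hump_fun_supersolution:
  assumes "v \<in> mod_V V Ep nn"
  shows "0 \<le> \<Delta> (hump_fun \<sigma> nn) v + (case v of Orig _ \<Rightarrow> 2 | New _ _ _ \<Rightarrow> - 1) * hump_fun \<sigma> nn v"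
proof (cases v)
  case (Orig x)
  with assms have "x \<in> V" by (auto simp: mod_V_def)
  from laplacian_hump_fun_Orig[OF this] Orig show ?thesis by (simp add: hump_fun_def)
next
  case (New a b i)
  with assms have "(a, b) \<in> Ep" "1 \<le> i" "i < nn a b"
    using nn_ge_2 by (auto simp: mod_V_def)
  then show ?thesis using New hump_fun_bounds[OF assms] laplacian_hump_fun_New by simp
qed

end

theorem proposition3p5:
  shows "\<exists>C1 C2 C3 :: real. C1 > 0 \<and> C2 > 0 \<and> C3 > 1 \<and>
    (\<forall>V w \<mu> \<sigma> Ep nn.
       simple_weighted_graph V w \<mu> \<and> adapted_weight w \<mu> \<sigma> \<and> orientation w Ep \<and> admissible_n w nn \<longrightarrow>
       (let U = (\<lambda>v. case v of Orig _ \<Rightarrow> C2 | New _ _ _ \<Rightarrow> - C1) in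
        \<exists>\<phi> :: mvert \<Rightarrow> real.
          (\<forall>v\<in>mod_V V Ep nn. 1 \<le> \<phi> v \<and> \<phi> v \<le> C3) \<and>
          (\<forall>v\<in>mod_V V Ep nn.
             laplacian (mod_w w Ep nn) (mod_mu w \<mu> \<sigma> nn) \<phi> v + U v * \<phi> v \<ge> 0)))"
proof (rule exI[of _ 1], rule exI[of _ 2], rule exI[of _ "3/2"], intro conjI allI impI)
  fix V w \<mu> \<sigma> Ep nn
  assume "simple_weighted_graph V w \<mu> \<and> adapted_weight w \<mu> \<sigma> \<and> orientation w Ep \<and> admissible_n w nn"
  then have "modified_graph V w \<mu> \<sigma> Ep nn"
    by (simp add: modified_graph_def)
  from modified_graph.hump_fun_bounds[OF this] modified_graph.hump_fun_supersolution[OF this]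
  show "let U = (\<lambda>v. case v of Orig _ \<Rightarrow> 2 | New _ _ _ \<Rightarrow> - 1) in
    \<exists>\<phi> :: mvert \<Rightarrow> real. (\<forall>v\<in>mod_V V Ep nn. 1 \<le> \<phi> v \<and> \<phi> v \<le> 3/2) \<and>
      (\<forall>v\<in>mod_V V Ep nn. laplacian (mod_w w Ep nn) (mod_mu w \<mu> \<sigma> nn) \<phi> v + U v * \<phi> v \<ge> 0)"
    unfolding Let_def by blast
qed simp_all

end
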